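(* In the Boosted HiPPA setting of the context, let $\{x^k\}$ and $\{\bar x^k\}$ be generated by the algorithm and let $\bar y^k\in\operatorname{prox}^p_{\gamma\varphi}(x^k)$ satisfy $\|\bar x^k-\bar y^k\|=\operatorname{dist}(\bar x^k,\operatorname{prox}^p_{\gamma\varphi}(x^k))$. If $\sum_{k=0}^\infty\|R^{\varepsilon_k}_\gamma(x^k)\|<\infty$ and $\sum_{k=0}^\infty\|d^k\|<\infty$, then $\{x^k\}$, $\{\bar x^k\}$ and $\{\bar y^k\}$ converge to a common proximal fixed point $\hat x$, i.e., $\hat x\in\operatorname{prox}^p_{\gamma\varphi}(\hat x)$.
   Context: Standing setting. $p>1$; $\varphi:\mathbb{R}^n\to\mathbb{R}\cup\{+\infty\}$ is proper, lsc and bounded from below. For $\gamma>0$: $\operatorname{prox}^p_{\gamma\varphi}(x):=\operatorname{argmin}_y\big(\varphi(y)+\frac1{p\gamma}\|x-y\|^p\big)$, $\varphi^p_\gamma(x):=\inf_y\big(\varphi(y)+\frac1{p\gamma}\|x-y\|^p\big)$. $\{\varepsilon_k\},\{\delta_k\}$ are non-increasing positive sequences with $\sum_k\varepsilon_k<\infty$, $\delta_k\downarrow0$. Prox approximation: for each index $j$ and point $x$ needed, a point $P_j(x)$ (written $\operatorname{prox}^{p,\varepsilon_j}_{\gamma\varphi}(x)$) is available with $\operatorname{dist}(P_j(x),\operatorname{prox}^p_{\gamma\varphi}(x))<\delta_j$ and $\varphi(P_j(x))+\frac1{p\gamma}\|x-P_j(x)\|^p<\varphi^p_\gamma(x)+\varepsilon_j$.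 Define $\varphi^{p,\varepsilon_j}_\gamma(x):=\varphi(P_j(x))+\frac1{p\gamma}\|x-P_j(x)\|^p$, $R^{\varepsilon_j}_\gamma(x):=x-P_j(x)$. Boosted HiPPA: choose $x^0$, $\gamma>0$, $\sigma\in(0,\frac1{p\gamma})$, $\vartheta\in(0,1)$. At iteration $k$: $\bar x^k:=P_k(x^k)$; choose a direction $d^k$; for $m=0,1,\dots$ set $\alpha_k=\vartheta^m$, $\hat x^{k+1}=(1-\alpha_k)\bar x^k+\alpha_k(x^k+d^k)$, until $\varphi^{p,\varepsilon_{k+1}}_\gamma(\hat x^{k+1})\le\varphi^{p,\varepsilon_k}_\gamma(x^k)-\sigma\|R^{\varepsilon_k}_\gamma(x^k)\|^p+\varepsilon_k+\varepsilon_{k+1}$; set $x^{k+1}=\hat x^{k+1}$. *)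

theory Defs
  imports "HOL-Analysis.Analysis"
begin

definition lsc_fun :: "('a::topological_space \<Rightarrow> ereal) \<Rightarrow> bool" where
  "lsc_fun f \<longleftrightarrow> (\<forall>x. f x \<le> Liminf (at x) f)"

definition prox_obj :: "real \<Rightarrow> real \<Rightarrow> ('a::real_normed_vector \<Rightarrow> ereal) \<Rightarrow> 'a \<Rightarrow> 'a \<Rightarrow> ereal" where
  "prox_obj p \<gamma> \<phi> x y = \<phi> y + ereal (norm (x - y) powr p / (p * \<gamma>))"

definition hprox :: "real \<Rightarrow> real \<Rightarrow> ('a::real_normed_vector \<Rightarrow> ereal) \<Rightarrow> 'a \<Rightarrow> 'a set" where
  "hprox p \<gamma> \<phi> x = {y. \<forall>z. prox_obj p \<gamma> \<phi> x y \<le> prox_obj p \<gamma> \<phi> x z}"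

definition hmoreau :: "real \<Rightarrow> real \<Rightarrow> ('a::real_normed_vector \<Rightarrow> ereal) \<Rightarrow> 'a \<Rightarrow> ereal" where
  "hmoreau p \<gamma> \<phi> x = (INF y. prox_obj p \<gamma> \<phi> x y)"

end

theory Submission
  imports Defs
begin

text \<open>Each step is \<open>x (k+1) - x k = (1 - \<alpha>\<^sub>k) (xbar k - x k) + \<alpha>\<^sub>k d k\<close> with
  \<open>\<alpha>\<^sub>k = \<theta> ^ m k \<in> [0,1]\<close>, so summability of the residuals \<open>\<parallel>x k - xbar k\<parallel>\<close> and of the directions
  makes the increments of \<open>x\<close> summable and \<open>x\<close> converges. The residuals tend to zero and
  \<open>\<parallel>xbar k - ybar k\<parallel> < \<delta> k \<rightarrow> 0\<close>, so all three sequences share the limit. The graph of the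
  proximal map is closed (lower semicontinuity of \<open>\<phi>\<close> plus continuity of the penalty term),
  hence the limit is a proximal fixed point.\<close>

lemma lsc_fun_le_liminf:
  fixes f :: "'a::topological_space \<Rightarrow> ereal"
  assumes "lsc_fun f" and "y \<longlonglongrightarrow> a"
  shows "f a \<le> liminf (\<lambda>n. f (y n))"
  unfolding le_Liminf_iff
proof (intro allI impI)
  fix t assume "t < f a"
  with \<open>lsc_fun f\<close> have "t < Liminf (at a) f"
    unfolding lsc_fun_def by (meson less_le_trans)
  then have "eventually (\<lambda>z. t < f z) (at a)"
    using le_Liminf_iff[of "Liminf (at a) f" "at a" f] by blast
  with \<open>t < f a\<close> have "eventually (\<lambda>z. t < f z) (nhds a)"
    by (simp add: eventually_nhds_conv_at)
  from eventually_compose_filterlim[OF this \<open>y \<longlonglongrightarrow> a\<close>]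
  show "eventually (\<lambda>n. t < f (y n)) sequentially" .
qed

lemma lsc_fun_le_lim:
  fixes f :: "'a::topological_space \<Rightarrow> ereal"
  assumes "lsc_fun f" and "y \<longlonglongrightarrow> a"
    and "\<And>n. f (y n) \<le> r n" and "r \<longlonglongrightarrow> L"
  shows "f a \<le> L"
proof -
  have "f a \<le> liminf (\<lambda>n. f (y n))"
    using assms(1,2) by (rule lsc_fun_le_liminf)
  also have "\<dots> \<le> liminf r"
    using assms(3) by (intro Liminf_mono) simp
  also have "\<dots> = L"
    using assms(4) by (simp add: lim_imp_Liminf)
  finally show ?thesis .
qed

lemma prox_obj_le_iff:
  "prox_obj p \<gamma> \<phi> x y \<le> prox_obj p \<gamma> \<phi> x z \<longleftrightarrow>
     \<phi> y \<le> \<phi> z + ereal (norm (x - z) powr p / (p * \<gamma>) - norm (x - y) powr p / (p * \<gamma>))"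
  unfolding prox_obj_def by (cases "\<phi> y"; cases "\<phi> z") auto

lemma tendsto_prox_penalty:
  fixes x :: "nat \<Rightarrow> 'a::real_normed_vector"
  assumes "p > 0" and "x \<longlonglongrightarrow> a" and "y \<longlonglongrightarrow> b"
  shows "(\<lambda>n. norm (x n - y n) powr p / (p * \<gamma>)) \<longlonglongrightarrow> norm (a - b) powr p / (p * \<gamma>)"
  unfolding divide_inverse
  using assms by (intro tendsto_mult_right tendsto_powr' tendsto_norm tendsto_diff) auto

lemma hprox_closed_graph:
  fixes \<phi> :: "'a::real_normed_vector \<Rightarrow> ereal"
  assumes "lsc_fun \<phi>" and "p > 0"
    and "x \<longlonglongrightarrow> a" and "y \<longlonglongrightarrow> b" and "\<And>n. y n \<in> hprox p \<gamma> \<phi> (x n)"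
  shows "b \<in> hprox p \<gamma> \<phi> a"
  unfolding hprox_def
proof (intro CollectI allI)
  fix z
  define pen where "pen u v = norm (u - v) powr p / (p * \<gamma>)" for u v :: 'a
  have bound: "\<phi> (y n) \<le> \<phi> z + ereal (pen (x n) z - pen (x n) (y n))" for n
    using assms(5)[of n] by (simp add: hprox_def pen_def flip: prox_obj_le_iff)
  have "(\<lambda>n. pen (x n) z - pen (x n) (y n)) \<longlonglongrightarrow> pen a z - pen a b"
    unfolding pen_def using assms(2-4) by (intro tendsto_diff tendsto_prox_penalty tendsto_const)
  then have lim: "(\<lambda>n. \<phi> z + ereal (pen (x n) z - pen (x n) (y n)))
      \<longlonglongrightarrow> \<phi> z + ereal (pen a z - pen a b)"
    by (intro tendsto_add_ereal_general1 tendsto_const tendsto_ereal) auto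
  from lsc_fun_le_lim[OF assms(1,4) bound lim]
  have "\<phi> b \<le> \<phi> z + ereal (pen a z - pen a b)" .
  then show "prox_obj p \<gamma> \<phi> a b \<le> prox_obj p \<gamma> \<phi> a z"
    by (simp add: prox_obj_le_iff pen_def)
qed

lemma norm_convex_step_le:
  fixes u v w :: "'a::real_normed_vector"
  assumes "0 \<le> t" and "t \<le> 1"
  shows "norm ((1 - t) *\<^sub>R u + t *\<^sub>R (v + w) - v) \<le> norm (v - u) + norm w"
proof -
  have "(1 - t) *\<^sub>R u + t *\<^sub>R (v + w) - v = (1 - t) *\<^sub>R (u - v) + t *\<^sub>R w"
    by (simp add: algebra_simps)
  also have "norm \<dots> \<le> (1 - t) * norm (v - u) + t * norm w"
    using assms norm_triangle_ineq[of "(1 - t) *\<^sub>R (u - v)" "t *\<^sub>R w"]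
    by (simp add: norm_minus_commute)
  also have "\<dots> \<le> norm (v - u) + norm w"
    using assms by (intro add_mono mult_left_le_one_le) auto
  finally show ?thesis .
qed

lemma summable_norm_diff_imp_convergent:
  fixes f :: "nat \<Rightarrow> 'a::banach"
  assumes "summable (\<lambda>n. norm (f (Suc n) - f n))"
  shows "convergent f"
proof -
  have "(\<lambda>n. f 0 + (\<Sum>i<n. f (Suc i) - f i)) \<longlonglongrightarrow> f 0 + (\<Sum>i. f (Suc i) - f i)"
    using summable_LIMSEQ[OF summable_norm_cancel[OF assms]] by (rule tendsto_add[OF tendsto_const])
  moreover have "(\<lambda>n. f 0 + (\<Sum>i<n. f (Suc i) - f i)) = f"
    by (simp add: sum_lessThan_telescope)
  ultimately show ?thesis
    unfolding convergent_def by metis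
qed

theorem theorem11:
  fixes \<phi> :: "'a::euclidean_space \<Rightarrow> ereal"
    and p \<gamma> \<sigma> \<theta> :: real
    and \<epsilon> \<delta> :: "nat \<Rightarrow> real"
    and P :: "nat \<Rightarrow> 'a \<Rightarrow> 'a"
    and x xbar ybar d :: "nat \<Rightarrow> 'a"
    and m :: "nat \<Rightarrow> nat"
  assumes p_gt1: "p > 1"
    and proper: "\<exists>z. \<phi> z \<noteq> \<infinity>"
    and lsc: "lsc_fun \<phi>"
    and bdd_below: "\<exists>c::real. \<forall>z. ereal c \<le> \<phi> z"
    and gamma_pos: "\<gamma> > 0"
    and sigma: "0 < \<sigma>" "\<sigma> < 1 / (p * \<gamma>)"
    and theta: "0 < \<theta>" "\<theta> < 1"
    and eps_pos: "\<And>k. \<epsilon> k > 0" and eps_dec: "decseq \<epsilon>" and eps_sum: "summable \<epsilon>"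
    and delta_pos: "\<And>k. \<delta> k > 0" and delta_dec: "decseq \<delta>" and delta_lim: "\<delta> \<longlonglongrightarrow> 0"
    and P_dist: "\<And>j z. infdist (P j z) (hprox p \<gamma> \<phi> z) < \<delta> j"
    and P_val: "\<And>j z. prox_obj p \<gamma> \<phi> z (P j z) < hmoreau p \<gamma> \<phi> z + ereal (\<epsilon> j)"
    and xbar_def: "\<And>k. xbar k = P k (x k)"
    and step: "\<And>k. x (Suc k) = (1 - \<theta> ^ m k) *\<^sub>R xbar k + \<theta> ^ m k *\<^sub>R (x k + d k)"
    and accept: "\<And>k. prox_obj p \<gamma> \<phi> (x (Suc k)) (P (Suc k) (x (Suc k)))
        \<le> prox_obj p \<gamma> \<phi> (x k) (P k (x k)) - ereal (\<sigma> * norm (x k - P k (x k)) powr p)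
           + ereal (\<epsilon> k + \<epsilon> (Suc k))"
    and first_accept: "\<And>k j. j < m k \<Longrightarrow>
        (let z = (1 - \<theta> ^ j) *\<^sub>R xbar k + \<theta> ^ j *\<^sub>R (x k + d k) in
          \<not> (prox_obj p \<gamma> \<phi> z (P (Suc k) z)
              \<le> prox_obj p \<gamma> \<phi> (x k) (P k (x k)) - ereal (\<sigma> * norm (x k - P k (x k)) powr p)
                 + ereal (\<epsilon> k + \<epsilon> (Suc k))))"
    and ybar_in: "\<And>k. ybar k \<in> hprox p \<gamma> \<phi> (x k)"
    and ybar_dist: "\<And>k. dist (xbar k) (ybar k) = infdist (xbar k) (hprox p \<gamma> \<phi> (x k))"
    and sum_R: "summable (\<lambda>k. norm (x k - P k (x k)))"
    and sum_d: "summable (\<lambda>k. norm (d k))"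
  shows "\<exists>xhat. x \<longlonglongrightarrow> xhat \<and> xbar \<longlonglongrightarrow> xhat \<and> ybar \<longlonglongrightarrow> xhat
          \<and> xhat \<in> hprox p \<gamma> \<phi> xhat"
proof -
  have "norm (x (Suc k) - x k) \<le> norm (x k - P k (x k)) + norm (d k)" for k
    unfolding step[of k] xbar_def using theta
    by (intro norm_convex_step_le) (auto simp: power_le_one)
  then have "summable (\<lambda>k. norm (x (Suc k) - x k))"
    by (intro summable_comparison_test[OF _ summable_add[OF sum_R sum_d]]) auto
  then obtain xhat where x_lim: "x \<longlonglongrightarrow> xhat"
    using summable_norm_diff_imp_convergent convergent_def by blast
  have "(\<lambda>k. x k - xbar k) \<longlonglongrightarrow> 0"
    using summable_LIMSEQ_zero[OF sum_R] unfolding xbar_def by (rule tendsto_norm_zero_cancel)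
  with x_lim have xbar_lim: "xbar \<longlonglongrightarrow> xhat"
    by (rule Lim_transform2)
  have "dist (xbar k) (ybar k) < \<delta> k" for k
    using ybar_dist[of k] P_dist[of k "x k"] by (simp only: xbar_def)
  then have "(\<lambda>k. xbar k - ybar k) \<longlonglongrightarrow> 0"
    by (intro Lim_null_comparison[OF _ delta_lim]) (simp add: dist_norm less_imp_le)
  with xbar_lim have ybar_lim: "ybar \<longlonglongrightarrow> xhat"
    by (rule Lim_transform2)
  have "xhat \<in> hprox p \<gamma> \<phi> xhat"
    using p_gt1 by (intro hprox_closed_graph[OF lsc _ x_lim ybar_lim ybar_in]) simp
  with x_lim xbar_lim ybar_lim show ?thesis
    by blast
qed

end
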